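(* Let $T$ be a finite set and $\mathcal{M}_T$ a matroid on $T$. Suppose $T=S_j\uplus P_j$ for $j=1,\dots,n$, and $\mathcal{M}_T$ is $\{S_j,P_j\}$-complete for every $j=1,\dots,n$. Let $\{T_1,\dots,T_k\}$ be a partition of $T$ (blocks may be empty) such that for each pair $m\neq m'$ there is some $j$ with $T_m\subseteq S_j$ and $T_{m'}\subseteq P_j$. Then: 1. If $Q\subseteq T$ and $\mathcal{M}_Q$ is a minor of $\mathcal{M}_T$ on $Q$, then $\mathcal{M}_Q$ is $\{S_j\cap Q,P_j\cap Q\}$-complete for $j=1,\dots,n$. 2. If $\{Q_1,\dots,Q_k\}$ is a partition of a set $Q\subseteq T$ with $Q_j\subseteq T_j$ for $j=1,\dots,k$, then for all $i\neq j$ in $\{1,\dots,k\}$, every minor $\mathcal{M}_{Q_iQ_j}$ of $\mathcal{M}_T$ on $Q_i\uplus Q_j$ is $\{Q_i,Q_j\}$-complete.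
   Context: Matroids are on finite sets, given by their bases. A minor of $\mathcal{M}$ on $Q$ is a matroid $\mathcal{M}\circ A\times Q$ with $Q\subseteq A$, where $\circ$ is restriction (independent sets inside $A$) and $\times$ is contraction (bases = minimal sets $b\cap Q$, $b$ a base). For a partition $\{A,B\}$ of the ground set of a matroid $\mathcal{M}_{AB}$ (blocks may be empty), $\mathcal{M}_{AB}$ is $\{A,B\}$-complete if whenever $b_A,b'_A\subseteq A$, $b_B,b'_B\subseteq B$ and $b_A\uplus b_B$, $b_A\uplus b'_B$, $b'_A\uplus b_B$ are bases, then $b'_A\uplus b'_B$ is a base. *)

theory Defs
  imports Main
begin

definition matroid :: "'a set \<Rightarrow> 'a set set \<Rightarrow> bool" where
  "matroid E M \<longleftrightarrow> finite E \<and> M \<noteq> {} \<and> (\<forall>b\<in>M. b \<subseteq> E) \<and>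
     (\<forall>b1\<in>M. \<forall>b2\<in>M. \<forall>x\<in>b1 - b2. \<exists>y\<in>b2 - b1. insert y (b1 - {x}) \<in> M)"

definition indep :: "'a set set \<Rightarrow> 'a set \<Rightarrow> bool" where
  "indep M I \<longleftrightarrow> (\<exists>b\<in>M. I \<subseteq> b)"

definition restrict :: "'a set set \<Rightarrow> 'a set \<Rightarrow> 'a set set" where
  "restrict M A = {I. indep M I \<and> I \<subseteq> A \<and> \<not> (\<exists>J. indep M J \<and> J \<subseteq> A \<and> I \<subset> J)}"

definition contract :: "'a set set \<Rightarrow> 'a set \<Rightarrow> 'a set set" where
  "contract M Q = {x. (\<exists>b\<in>M. x = b \<inter> Q) \<and> \<not> (\<exists>b'\<in>M. b' \<inter> Q \<subset> x)}"

definition minor :: "'a set \<Rightarrow> 'a set set \<Rightarrow> 'a set \<Rightarrow> 'a set set \<Rightarrow> bool" where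
  "minor E M Q MQ \<longleftrightarrow> (\<exists>A. Q \<subseteq> A \<and> A \<subseteq> E \<and> MQ = contract (restrict M A) Q)"

definition complete :: "'a set set \<Rightarrow> 'a set \<Rightarrow> 'a set \<Rightarrow> bool" where
  "complete M A B \<longleftrightarrow>
     (\<forall>bA bA' bB bB'. bA \<subseteq> A \<longrightarrow> bA' \<subseteq> A \<longrightarrow> bB \<subseteq> B \<longrightarrow> bB' \<subseteq> B \<longrightarrow>
        bA \<union> bB \<in> M \<longrightarrow> bA \<union> bB' \<in> M \<longrightarrow> bA' \<union> bB \<in> M \<longrightarrow> bA' \<union> bB' \<in> M)"

end

theory Submission imports Defs begin

text \<open>Every minor of a matroid M on Q has as bases the sets c \<subseteq> Q with c \<union> F a base of M,
  for a fixed set F: restricting to A fixes the part K outside A of a base meeting A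
  maximally, and contracting to Q fixes the part L outside Q of a base meeting Q minimally.
  Completeness for a partition {S, P} then passes to such a minor by splitting F into F \<inter> S and
  F \<inter> P.  The second claim is the special case of the first in which the two blocks of the minor
  lie on opposite sides of one of the partitions {S j, P j}.\<close>

lemma matroid_finite: "matroid E M \<Longrightarrow> finite E"
  by (simp add: matroid_def)

lemma matroid_bases_nonempty: "matroid E M \<Longrightarrow> M \<noteq> {}"
  by (simp add: matroid_def)

lemma matroid_base_subset: "matroid E M \<Longrightarrow> b \<in> M \<Longrightarrow> b \<subseteq> E"
  by (simp add: matroid_def)

lemma matroid_exchange:
  "matroid E M \<Longrightarrow> b1 \<in> M \<Longrightarrow> b2 \<in> M \<Longrightarrow> x \<in> b1 - b2 \<Longrightarrow> \<exists>y\<in>b2 - b1. insert y (b1 - {x}) \<in> M"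
  unfolding matroid_def by blast

lemma matroid_base_finite: "matroid E M \<Longrightarrow> b \<in> M \<Longrightarrow> finite b"
  using matroid_finite matroid_base_subset finite_subset by metis

lemma matroid_base_subset_eq:
  assumes M: "matroid E M" and "b \<in> M" "b' \<in> M" "b' \<subseteq> b"
  shows "b' = b"
proof (rule ccontr)
  assume "b' \<noteq> b"
  then obtain x where "x \<in> b - b'" using \<open>b' \<subseteq> b\<close> by blast
  then show False using matroid_exchange[OF M \<open>b \<in> M\<close> \<open>b' \<in> M\<close>] \<open>b' \<subseteq> b\<close> by blast
qed

text \<open>Exchanging the elements of b2 outside I \<union> b one at a time against elements of b.\<close>
lemma matroid_base_extend:
  assumes M: "matroid E M" and b: "b \<in> M" and b2: "b2 \<in> M" "I \<subseteq> b2"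
  shows "\<exists>b'\<in>M. I \<subseteq> b' \<and> b' \<subseteq> I \<union> b \<and> card b' = card b2"
  using b2
proof (induction "card (b2 - (I \<union> b))" arbitrary: b2)
  case 0
  then have "b2 \<subseteq> I \<union> b" using matroid_base_finite[OF M] by auto
  with 0 show ?case by blast
next
  case (Suc n)
  have fin: "finite b2" using matroid_base_finite[OF M Suc.prems(1)] .
  obtain x where x: "x \<in> b2 - (I \<union> b)"
    using Suc.hyps(2) by (metis all_not_in_conv card.empty nat.distinct(1))
  then obtain y where y: "y \<in> b - b2" and b3: "insert y (b2 - {x}) \<in> M"
    using matroid_exchange[OF M Suc.prems(1) b] by blast
  have "insert y (b2 - {x}) - (I \<union> b) = (b2 - (I \<union> b)) - {x}" using x y by blast
  then have "n = card (insert y (b2 - {x}) - (I \<union> b))" using Suc.hyps(2) x fin by simp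
  moreover have "I \<subseteq> insert y (b2 - {x})" using x Suc.prems(2) by blast
  moreover have "card (insert y (b2 - {x})) = card b2"
    using x y fin card_gt_0_iff[of b2] by (auto simp: card.insert_remove)
  ultimately show ?case using Suc.hyps(1)[OF _ b3] by simp
qed

lemma matroid_bases_card_eq:
  assumes M: "matroid E M" and "b1 \<in> M" "b2 \<in> M"
  shows "card b1 = card b2"
proof -
  obtain b' where "b' \<in> M" "b' \<subseteq> b1" "card b' = card b2"
    using matroid_base_extend[OF M \<open>b1 \<in> M\<close> \<open>b2 \<in> M\<close>, of "{}"] by auto
  then show ?thesis using matroid_base_subset_eq[OF M \<open>b1 \<in> M\<close>] by metis
qed

definition completions :: "'a set set \<Rightarrow> 'a set \<Rightarrow> 'a set \<Rightarrow> 'a set set" where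
  "completions M F Q = {c. c \<subseteq> Q \<and> c \<union> F \<in> M}"

lemma matroid_completions:
  assumes M: "matroid E M" and "A \<subseteq> E" "K \<inter> A = {}" "completions M K A \<noteq> {}"
  shows "matroid A (completions M K A)"
  unfolding matroid_def
proof (intro conjI ballI)
  show "finite A" using matroid_finite[OF M] \<open>A \<subseteq> E\<close> finite_subset by blast
  show "completions M K A \<noteq> {}" by fact
next
  fix c assume "c \<in> completions M K A"
  then show "c \<subseteq> A" by (simp add: completions_def)
next
  fix c1 c2 x assume c: "c1 \<in> completions M K A" "c2 \<in> completions M K A" and x: "x \<in> c1 - c2"
  then have bases: "c1 \<union> K \<in> M" "c2 \<union> K \<in> M" by (simp_all add: completions_def)
  have "x \<in> (c1 \<union> K) - (c2 \<union> K)" using c x \<open>K \<inter> A = {}\<close> by (auto simp: completions_def)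
  then obtain y where y: "y \<in> (c2 \<union> K) - (c1 \<union> K)" and "insert y ((c1 \<union> K) - {x}) \<in> M"
    using matroid_exchange[OF M bases] by blast
  moreover have "insert y ((c1 \<union> K) - {x}) = insert y (c1 - {x}) \<union> K" using x \<open>K \<inter> A = {}\<close> c
    by (auto simp: completions_def)
  ultimately show "\<exists>y\<in>c2 - c1. insert y (c1 - {x}) \<in> completions M K A"
    using c by (auto simp: completions_def)
qed

lemma completions_completions:
  "L \<subseteq> A \<Longrightarrow> Q \<subseteq> A \<Longrightarrow> completions (completions M K A) L Q = completions M (L \<union> K) Q"
  by (auto simp: completions_def Un_assoc)

lemma restrict_eq_completions:
  assumes M: "matroid E M"
  obtains K where "K \<subseteq> E" "K \<inter> A = {}" "completions M K A \<noteq> {}"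
    "restrict M A = completions M K A"
proof -
  obtain b0 where b0: "b0 \<in> M" and b0_min: "\<And>b. b \<in> M \<Longrightarrow> card (b0 - A) \<le> card (b - A)"
    using matroid_bases_nonempty[OF M] ex_has_least_nat[of "\<lambda>b. b \<in> M" _ "\<lambda>b. card (b - A)"]
    by blast
  define K where "K = b0 - A"
  have fin_K: "finite K" using matroid_base_finite[OF M b0] by (simp add: K_def)
  have "b0 \<inter> A \<in> completions M K A" using b0 by (simp add: completions_def K_def Int_Diff_Un)
  then have nonempty: "completions M K A \<noteq> {}" by blast
  have "restrict M A = completions M K A"
  proof (intro set_eqI iffI)
    fix I assume "I \<in> restrict M A"
    then have I_A: "I \<subseteq> A" and "indep M I" and I_max: "\<And>J. indep M J \<Longrightarrow> J \<subseteq> A \<Longrightarrow> \<not> I \<subset> J"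
      by (auto simp: restrict_def)
    then obtain b2 where "b2 \<in> M" "I \<subseteq> b2" by (auto simp: indep_def)
    then obtain b' where b': "b' \<in> M" "I \<subseteq> b'" "b' \<subseteq> I \<union> b0"
      using matroid_base_extend[OF M b0] by blast
    have "indep M (b' \<inter> A)" using b'(1) by (auto simp: indep_def)
    then have inside: "b' \<inter> A = I" using I_max[of "b' \<inter> A"] I_A b'(2) by blast
    have "b' - A \<subseteq> K" using b'(3) I_A by (auto simp: K_def)
    moreover have "card K \<le> card (b' - A)" using b0_min[OF b'(1)] by (simp add: K_def)
    ultimately have "b' - A = K" using card_seteq[OF fin_K] by blast
    with inside have "b' = I \<union> K" by blast
    then show "I \<in> completions M K A" using b'(1) I_A by (simp add: completions_def)
  next
    fix I assume "I \<in> completions M K A"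
    then have I_A: "I \<subseteq> A" and IK: "I \<union> K \<in> M" by (auto simp: completions_def)
    have "\<not> I \<subset> J" if "indep M J" "J \<subseteq> A" for J
    proof
      assume "I \<subset> J"
      obtain b where b: "b \<in> M" "J \<subseteq> b" using \<open>indep M J\<close> by (auto simp: indep_def)
      have fin_b: "finite b" using matroid_base_finite[OF M b(1)] .
      have "card I < card J" using \<open>I \<subset> J\<close> b(2) fin_b by (meson finite_subset psubset_card_mono)
      also have "card J \<le> card (b \<inter> A)" using b(2) \<open>J \<subseteq> A\<close> fin_b by (intro card_mono) auto
      finally have "card I < card (b \<inter> A)" .
      moreover have "card b = card (b \<inter> A) + card (b - A)" using fin_b by (rule card_Int_Diff)
      moreover have "card (I \<union> K) = card I + card K"
        using I_A fin_K matroid_base_finite[OF M IK] by (intro card_Un_disjoint) (auto simp: K_def)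
      moreover have "card K \<le> card (b - A)" using b0_min[OF b(1)] by (simp add: K_def)
      moreover have "card b = card (I \<union> K)" using matroid_bases_card_eq[OF M b(1) IK] .
      ultimately show False by linarith
    qed
    moreover have "indep M I" using IK by (auto simp: indep_def)
    ultimately show "I \<in> restrict M A" using I_A by (auto simp: restrict_def)
  qed
  moreover have "K \<subseteq> E" "K \<inter> A = {}" using matroid_base_subset[OF M b0] by (auto simp: K_def)
  ultimately show ?thesis using nonempty that by blast
qed

lemma contract_eq_completions:
  assumes M: "matroid E M"
  obtains L where "L \<subseteq> E - Q" "contract M Q = completions M L Q"
proof -
  obtain b0 where b0: "b0 \<in> M" and b0_min: "\<And>b. b \<in> M \<Longrightarrow> card (b0 \<inter> Q) \<le> card (b \<inter> Q)"
    using matroid_bases_nonempty[OF M] ex_has_least_nat[of "\<lambda>b. b \<in> M" _ "\<lambda>b. card (b \<inter> Q)"]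
    by blast
  define L where "L = b0 - Q"
  have fin_b0: "finite b0" using matroid_base_finite[OF M b0] .
  have card_b0: "card b0 = card (b0 \<inter> Q) + card L" unfolding L_def using fin_b0 by (rule card_Int_Diff)
  have "contract M Q = completions M L Q"
  proof (intro set_eqI iffI)
    fix x assume "x \<in> contract M Q"
    then obtain b where b: "b \<in> M" "x = b \<inter> Q" and x_min: "\<And>b'. b' \<in> M \<Longrightarrow> \<not> b' \<inter> Q \<subset> x"
      by (auto simp: contract_def)
    obtain b' where b': "b' \<in> M" "L \<subseteq> b'" "b' \<subseteq> L \<union> b"
      using matroid_base_extend[OF M b(1) b0, of L] by (auto simp: L_def)
    have "b' \<inter> Q \<subseteq> x" using b'(3) b(2) by (auto simp: L_def)
    then have inside: "b' \<inter> Q = x" using x_min[OF b'(1)] by blast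
    have fin_b': "finite b'" using matroid_base_finite[OF M b'(1)] .
    have "card b' = card (b' \<inter> Q) + card (b' - Q)" using fin_b' by (rule card_Int_Diff)
    moreover have "card b' = card b0" using matroid_bases_card_eq[OF M b'(1) b0] .
    moreover note b0_min[OF b'(1)] card_b0
    ultimately have "card (b' - Q) \<le> card L" by linarith
    moreover have "L \<subseteq> b' - Q" using b'(2) by (auto simp: L_def)
    ultimately have "b' - Q = L" using card_seteq[of "b' - Q" L] fin_b' by blast
    with inside have "b' = x \<union> L" by blast
    then show "x \<in> completions M L Q" using b'(1) b(2) by (auto simp: completions_def)
  next
    fix c assume "c \<in> completions M L Q"
    then have c_Q: "c \<subseteq> Q" and cL: "c \<union> L \<in> M" by (auto simp: completions_def)
    have fin_cL: "finite (c \<union> L)" using matroid_base_finite[OF M cL] .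
    have "card (c \<union> L) = card c + card L"
      using fin_cL c_Q by (intro card_Un_disjoint) (auto simp: L_def)
    with card_b0 matroid_bases_card_eq[OF M cL b0] have card_c: "card c = card (b0 \<inter> Q)" by linarith
    have "\<not> b' \<inter> Q \<subset> c" if "b' \<in> M" for b'
    proof
      assume "b' \<inter> Q \<subset> c"
      then have "card (b' \<inter> Q) < card c" using fin_cL by (meson finite_Un psubset_card_mono)
      then show False using b0_min[OF \<open>b' \<in> M\<close>] card_c by linarith
    qed
    moreover have "c = (c \<union> L) \<inter> Q" using c_Q by (auto simp: L_def)
    ultimately show "c \<in> contract M Q" using cL unfolding contract_def by blast
  qed
  moreover have "L \<subseteq> E - Q" using matroid_base_subset[OF M b0] by (auto simp: L_def)
  ultimately show ?thesis using that by blast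
qed

lemma minor_eq_completions:
  assumes M: "matroid E M" and "minor E M Q MQ"
  obtains F where "F \<subseteq> E" "MQ = completions M F Q"
proof -
  obtain A where A: "Q \<subseteq> A" "A \<subseteq> E" and MQ: "MQ = contract (restrict M A) Q"
    using \<open>minor E M Q MQ\<close> by (auto simp: minor_def)
  obtain K where K: "K \<subseteq> E" "K \<inter> A = {}" "completions M K A \<noteq> {}"
    and restrict_eq: "restrict M A = completions M K A"
    using restrict_eq_completions[OF M] by blast
  have "matroid A (completions M K A)" using matroid_completions[OF M A(2) K(2,3)] .
  then obtain L where L: "L \<subseteq> A - Q" and "contract (completions M K A) Q = completions (completions M K A) L Q"
    by (rule contract_eq_completions)
  then have "MQ = completions M (L \<union> K) Q"
    using MQ restrict_eq completions_completions[of L A Q M K] A(1) by auto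
  moreover have "L \<union> K \<subseteq> E" using L A(2) K(1) by blast
  ultimately show ?thesis using that by blast
qed

text \<open>Bases of the completions extend by F \<inter> S on the S-side and by F \<inter> P on the P-side.\<close>
lemma complete_completions:
  assumes complete: "complete M S P" and "F \<subseteq> S \<union> P"
  shows "complete (completions M F Q) (S \<inter> Q) (P \<inter> Q)"
  unfolding complete_def
proof (intro allI impI)
  fix bA bA' bB bB'
  assume sides: "bA \<subseteq> S \<inter> Q" "bA' \<subseteq> S \<inter> Q" "bB \<subseteq> P \<inter> Q" "bB' \<subseteq> P \<inter> Q"
    and bases: "bA \<union> bB \<in> completions M F Q" "bA \<union> bB' \<in> completions M F Q"
      "bA' \<union> bB \<in> completions M F Q"
  have split: "(X \<union> (F \<inter> S)) \<union> (Y \<union> (F \<inter> P)) = X \<union> Y \<union> F" for X Y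
    using \<open>F \<subseteq> S \<union> P\<close> by blast
  have "(bA' \<union> (F \<inter> S)) \<union> (bB' \<union> (F \<inter> P)) \<in> M"
    using complete[unfolded complete_def, rule_format, of "bA \<union> (F \<inter> S)" "bA' \<union> (F \<inter> S)"
        "bB \<union> (F \<inter> P)" "bB' \<union> (F \<inter> P)"] sides bases
    by (auto simp: split completions_def)
  then show "bA' \<union> bB' \<in> completions M F Q" using sides by (auto simp: split completions_def)
qed

lemma complete_minor:
  assumes "matroid E M" "complete M S P" "S \<union> P = E" "minor E M Q MQ"
  shows "complete MQ (S \<inter> Q) (P \<inter> Q)"
proof -
  obtain F where "F \<subseteq> E" "MQ = completions M F Q"
    using minor_eq_completions[OF assms(1,4)] .
  then show ?thesis using complete_completions[OF assms(2)] assms(3) by simp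
qed

lemma complete_minor_across:
  assumes "matroid E M" "complete M S P" "S \<union> P = E" "S \<inter> P = {}"
    and "X \<subseteq> S" "Y \<subseteq> P" "minor E M (X \<union> Y) M'"
  shows "complete M' X Y"
proof -
  have "S \<inter> (X \<union> Y) = X" "P \<inter> (X \<union> Y) = Y" using assms(4-6) by blast+
  then show ?thesis using complete_minor[OF assms(1-3,7)] by simp
qed

theorem corollary2:
  fixes T :: "'a set" and MT :: "'a set set"
    and S P :: "nat \<Rightarrow> 'a set" and n :: nat
    and TT :: "nat \<Rightarrow> 'a set" and k :: nat
  assumes "finite T" and "matroid T MT"
    and "\<forall>j\<in>{1..n}. S j \<union> P j = T \<and> S j \<inter> P j = {}"
    and "\<forall>j\<in>{1..n}. complete MT (S j) (P j)"
    and "(\<Union>m\<in>{1..k}. TT m) = T"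
    and "\<forall>m\<in>{1..k}. \<forall>m'\<in>{1..k}. m \<noteq> m' \<longrightarrow> TT m \<inter> TT m' = {}"
    and "\<forall>m\<in>{1..k}. \<forall>m'\<in>{1..k}. m \<noteq> m' \<longrightarrow>
           (\<exists>j\<in>{1..n}. TT m \<subseteq> S j \<and> TT m' \<subseteq> P j)"
  shows "(\<forall>Q MQ. Q \<subseteq> T \<longrightarrow> minor T MT Q MQ \<longrightarrow>
            (\<forall>j\<in>{1..n}. complete MQ (S j \<inter> Q) (P j \<inter> Q)))
       \<and> (\<forall>Q QQ. Q \<subseteq> T \<longrightarrow> (\<Union>m\<in>{1..k}. QQ m) = Q
            \<longrightarrow> (\<forall>m\<in>{1..k}. \<forall>m'\<in>{1..k}. m \<noteq> m' \<longrightarrow> QQ m \<inter> QQ m' = {})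
            \<longrightarrow> (\<forall>m\<in>{1..k}. QQ m \<subseteq> TT m)
            \<longrightarrow> (\<forall>i\<in>{1..k}. \<forall>j\<in>{1..k}. i \<noteq> j \<longrightarrow>
                 (\<forall>M'. minor T MT (QQ i \<union> QQ j) M' \<longrightarrow> complete M' (QQ i) (QQ j))))"
proof (intro conjI allI impI ballI)
  fix Q MQ j assume "minor T MT Q MQ" "j \<in> {1..n}"
  then show "complete MQ (S j \<inter> Q) (P j \<inter> Q)"
    using complete_minor[OF assms(2)] assms(3,4) by blast
next
  fix Q QQ i j M'
  assume "\<forall>m\<in>{1..k}. QQ m \<subseteq> TT m" "i \<in> {1..k}" "j \<in> {1..k}" "i \<noteq> j"
    and "minor T MT (QQ i \<union> QQ j) M'"
  moreover obtain l where "l \<in> {1..n}" "TT i \<subseteq> S l" "TT j \<subseteq> P l"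
    using assms(7) \<open>i \<in> {1..k}\<close> \<open>j \<in> {1..k}\<close> \<open>i \<noteq> j\<close> by blast
  ultimately show "complete M' (QQ i) (QQ j)"
    using complete_minor_across[OF assms(2), of "S l" "P l" "QQ i" "QQ j"] assms(3,4) by blast
qed

end
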